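(* Let $X$ be a real-valued continuous random variable with density $f$ and finite variance, and let $\phi$ be the Gaussian density with the same mean and variance as $f$. Then $$\sigma[X]\leq\sqrt2\,\exp\{D(f\|\phi)\},$$ with equality if and only if $X$ is Gaussian.
   Context: Differential entropy $h$ is assumed to exist and be finite. Doubling constant: $\sigma[X]=\exp\{h(X+X')-h(X)\}$ where $X'$ is an independent copy of $X$. $D(f\|g)=\int f\log(f/g)$ is relative entropy. *)

theory Defs
  imports "HOL-Probability.Probability"
begin

text \<open>All objects are densities w.r.t. Lebesgue measure on the real line.
  Note ln 0 = 0 in Isabelle, so 0 * ln 0 = 0 as usual.\<close>

definition diff_entropy :: "(real \<Rightarrow> real) \<Rightarrow> real" where
  "diff_entropy f = - (\<integral>x. f x * ln (f x) \<partial>lborel)"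

text \<open>Density of X + X' for X, X' independent with densities f, g.\<close>
definition conv :: "(real \<Rightarrow> real) \<Rightarrow> (real \<Rightarrow> real) \<Rightarrow> real \<Rightarrow> real" where
  "conv f g x = (\<integral>y. f y * g (x - y) \<partial>lborel)"

definition doubling_const :: "(real \<Rightarrow> real) \<Rightarrow> real" where
  "doubling_const f = exp (diff_entropy (conv f f) - diff_entropy f)"

definition rel_entropy :: "(real \<Rightarrow> real) \<Rightarrow> (real \<Rightarrow> real) \<Rightarrow> real" where
  "rel_entropy f g = (\<integral>x. f x * ln (f x / g x) \<partial>lborel)"

definition dens_mean :: "(real \<Rightarrow> real) \<Rightarrow> real" where
  "dens_mean f = (\<integral>x. x * f x \<partial>lborel)"

definition dens_var :: "(real \<Rightarrow> real) \<Rightarrow> real" where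
  "dens_var f = (\<integral>x. (x - dens_mean f)\<^sup>2 * f x \<partial>lborel)"

end

theory Submission
  imports Defs
begin

text \<open>
  Write \<open>H\<close> for differential entropy, \<open>\<mu>, v\<close> for the mean and variance of
  \<open>f\<close>, and \<open>g = conv f f\<close> for the density of \<open>X + X'\<close>.  Means and variances add under
  convolution, so the Gaussians fitted to \<open>f\<close> and \<open>g\<close> are \<open>\<phi> = N(\<mu>, v)\<close> and
  \<open>\<psi> = N(2\<mu>, 2v)\<close>.  For a density \<open>h\<close> with second moment \<open>s\<^sup>2\<close> about \<open>m\<close> one has the exact
  identity \<open>D(h\<parallel>N(m, s\<^sup>2)) = - H(h) + ln(2\<pi>s\<^sup>2)/2 + 1/2\<close>.  Applied to \<open>f\<close> and \<open>g\<close> it gives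
  \<open>\<sigma>[X] = exp(H(g) - H(f)) = exp(-D(g\<parallel>\<psi>)) * sqrt 2 * exp(D(f\<parallel>\<phi>))\<close>, so the inequality
  is Gibbs' inequality \<open>D(g\<parallel>\<psi>) \<ge> 0\<close>, with equality iff \<open>g = \<psi>\<close> almost everywhere.
  Finally \<open>g\<close> is Gaussian iff \<open>f\<close> is: one direction is the stability of the normal law
  under convolution; for the other, the characteristic function of \<open>f\<close> squares to a
  nowhere vanishing Gaussian one, hence equals it by continuity, and Levy's uniqueness
  theorem identifies \<open>f\<close>.
\<close>

definition prob_density :: "(real \<Rightarrow> real) \<Rightarrow> bool" where
  "prob_density f \<longleftrightarrow>
     f \<in> borel_measurable borel \<and> (\<forall>x. 0 \<le> f x) \<and> has_bochner_integral lborel f 1"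

abbreviation dens_distr :: "(real \<Rightarrow> real) \<Rightarrow> real measure" where
  "dens_distr f \<equiv> density lborel (\<lambda>x. ennreal (f x))"

lemma prob_densityD:
  assumes "prob_density f"
  shows "f \<in> borel_measurable borel" "0 \<le> f x" "integrable lborel f" "integral\<^sup>L lborel f = 1"
  using assms by (auto simp: prob_density_def has_bochner_integral_iff)

lemma real_distribution_dens_distr:
  assumes f: "prob_density f"
  shows "real_distribution (dens_distr f)"
proof -
  have [measurable]: "f \<in> borel_measurable borel" using prob_densityD[OF f] by simp
  have "(\<integral>\<^sup>+x. ennreal (f x) \<partial>lborel) = 1"
    using prob_densityD[OF f] by (simp add: nn_integral_eq_integral)
  then have "prob_space (dens_distr f)"
    by (intro prob_spaceI) (simp add: emeasure_density)
  then show ?thesis by (simp add: real_distribution_def real_distribution_axioms_def)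
qed

lemma dens_distr_eq_iff:
  fixes f g :: "real \<Rightarrow> real"
  assumes [measurable]: "f \<in> borel_measurable borel" "g \<in> borel_measurable borel"
    and "\<And>x. 0 \<le> f x" "\<And>x. 0 \<le> g x"
  shows "dens_distr f = dens_distr g \<longleftrightarrow> (AE x in lborel. f x = g x)"
proof -
  have "dens_distr f = dens_distr g \<longleftrightarrow> (AE x in lborel. ennreal (f x) = ennreal (g x))"
    by (rule sigma_finite_measure.density_unique_iff[OF sigma_finite_lborel]) auto
  also have "\<dots> \<longleftrightarrow> (AE x in lborel. f x = g x)"
    using assms(3,4) by (simp add: ennreal_inj)
  finally show ?thesis .
qed

lemma dens_distr_integral:
  fixes k :: "real \<Rightarrow> 'c::{banach, second_countable_topology}"
  assumes f: "prob_density f" and [measurable]: "k \<in> borel_measurable borel"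
  shows "integrable (dens_distr f) k \<longleftrightarrow> integrable lborel (\<lambda>x. f x *\<^sub>R k x)"
    and "integral\<^sup>L (dens_distr f) k = (\<integral>x. f x *\<^sub>R k x \<partial>lborel)"
  using prob_densityD[OF f] by (auto simp: integrable_density integral_density)

lemma dens_moments:
  assumes f: "prob_density f" and finvar: "integrable lborel (\<lambda>x. x\<^sup>2 * f x)"
  shows "integrable lborel (\<lambda>x. (x - dens_mean f) * f x)"
    and "(\<integral>x. (x - dens_mean f) * f x \<partial>lborel) = 0"
    and "integrable lborel (\<lambda>x. (x - dens_mean f)\<^sup>2 * f x)"
proof -
  have [measurable]: "f \<in> borel_measurable borel" and nn: "\<And>x. 0 \<le> f x"
    and int_f: "integrable lborel f" "integral\<^sup>L lborel f = 1"
    using prob_densityD[OF f] by auto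
  have int_xf: "integrable lborel (\<lambda>x. x * f x)"
  proof (rule Bochner_Integration.integrable_bound)
    show "integrable lborel (\<lambda>x. f x + x\<^sup>2 * f x)" using int_f finvar by simp
    have "\<bar>x\<bar> \<le> 1 + x\<^sup>2" for x :: real
      using zero_le_power2[of "\<bar>x\<bar> - 1"] by (simp add: power2_diff)
    then have "\<bar>x\<bar> * f x \<le> (1 + x\<^sup>2) * f x" for x
      using nn[of x] by (intro mult_right_mono)
    then show "AE x in lborel. norm (x * f x) \<le> norm (f x + x\<^sup>2 * f x)"
      using nn by (simp add: abs_mult algebra_simps)
  qed simp
  let ?m = "dens_mean f"
  have lin: "(\<lambda>x. (x - ?m) * f x) = (\<lambda>x. x * f x - ?m * f x)" by (auto simp: algebra_simps)
  show "integrable lborel (\<lambda>x. (x - ?m) * f x)" unfolding lin using int_f int_xf by simp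
  show "(\<integral>x. (x - ?m) * f x \<partial>lborel) = 0"
    unfolding lin using int_f int_xf by (simp add: dens_mean_def)
  have quad: "(\<lambda>x. (x - ?m)\<^sup>2 * f x) = (\<lambda>x. x\<^sup>2 * f x - 2 * ?m * (x * f x) + ?m\<^sup>2 * f x)"
    by (auto simp: power2_eq_square algebra_simps)
  show "integrable lborel (\<lambda>x. (x - ?m)\<^sup>2 * f x)" unfolding quad using int_f int_xf finvar by simp
qed

lemma dens_distr_centred_moments:
  assumes f: "prob_density f" and finvar: "integrable lborel (\<lambda>x. x\<^sup>2 * f x)"
  shows "integrable (dens_distr f) (\<lambda>x. x - dens_mean f)"
    and "integral\<^sup>L (dens_distr f) (\<lambda>x. x - dens_mean f) = 0"
    and "integrable (dens_distr f) (\<lambda>x. (x - dens_mean f)\<^sup>2)"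
    and "integral\<^sup>L (dens_distr f) (\<lambda>x. (x - dens_mean f)\<^sup>2) = dens_var f"
  using dens_moments[OF f finvar]
  by (simp_all add: dens_distr_integral[OF f] mult.commute dens_var_def)

text \<open>A density (which has no atoms) has strictly positive variance.\<close>

lemma dens_var_pos:
  assumes f: "prob_density f" and finvar: "integrable lborel (\<lambda>x. x\<^sup>2 * f x)"
  shows "dens_var f > 0"
proof (rule ccontr)
  have [measurable]: "f \<in> borel_measurable borel" and nn: "\<And>x. 0 \<le> f x"
    using prob_densityD[OF f] by auto
  let ?m = "dens_mean f"
  assume "\<not> dens_var f > 0"
  moreover have "dens_var f \<ge> 0" unfolding dens_var_def using nn by (simp add: integral_nonneg_AE)
  ultimately have "(\<integral>x. (x - ?m)\<^sup>2 * f x \<partial>lborel) = 0" unfolding dens_var_def by simp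
  then have "AE x in lborel. (x - ?m)\<^sup>2 * f x = 0"
    using dens_moments(3)[OF f finvar] nn by (subst integral_nonneg_eq_0_iff_AE[symmetric]) auto
  then have "AE x in lborel. f x = 0"
    using AE_lborel_singleton[of ?m] by eventually_elim auto
  then have "integral\<^sup>L lborel f = 0" by (rule integral_eq_zero_AE)
  then show False using prob_densityD(4)[OF f] by simp
qed

lemma gibbs_pointwise:
  fixes a b :: real
  assumes "0 \<le> a" "0 < b"
  shows "a * ln (a / b) - a + b \<ge> 0" and "a * ln (a / b) - a + b = 0 \<longleftrightarrow> a = b"
proof -
  have "a * ln (a / b) - a + b \<ge> 0 \<and> (a * ln (a / b) - a + b = 0 \<longleftrightarrow> a = b)"
  proof (cases "a = 0")
    case False
    then have a: "a > 0" and q: "b / a > 0" using assms by auto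
    have gap: "a * ln (a / b) - a + b = a * ((b / a - 1) - ln (b / a))"
      using a assms by (simp add: ln_div field_simps)
    have "ln (b / a) \<le> b / a - 1" and "ln (b / a) = b / a - 1 \<longleftrightarrow> b / a = 1"
      using ln_le_minus_one[OF q] ln_eq_minus_one[OF q] by auto
    then show ?thesis unfolding gap using a by auto
  qed (use assms in auto)
  then show "a * ln (a / b) - a + b \<ge> 0" and "a * ln (a / b) - a + b = 0 \<longleftrightarrow> a = b" by auto
qed

lemma gibbs:
  assumes g: "prob_density g" and p: "prob_density p" and p_pos: "\<And>x. 0 < p x"
    and int_gg: "integrable lborel (\<lambda>x. g x * ln (g x))"
    and int_gp: "integrable lborel (\<lambda>x. g x * ln (p x))"
  shows "rel_entropy g p = (\<integral>x. g x * ln (g x) \<partial>lborel) - (\<integral>x. g x * ln (p x) \<partial>lborel)"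
    and "rel_entropy g p \<ge> 0"
    and "rel_entropy g p = 0 \<longleftrightarrow> (AE x in lborel. g x = p x)"
proof -
  have g0: "\<And>x. 0 \<le> g x" using prob_densityD[OF g] by auto
  have split: "(\<lambda>x. g x * ln (g x / p x)) = (\<lambda>x. g x * ln (g x) - g x * ln (p x))"
  proof
    show "g x * ln (g x / p x) = g x * ln (g x) - g x * ln (p x)" for x
      using g0[of x] p_pos[of x] by (cases "g x = 0") (auto simp: ln_div algebra_simps)
  qed
  have int_rel: "integrable lborel (\<lambda>x. g x * ln (g x / p x))"
    unfolding split using int_gg int_gp by simp
  show "rel_entropy g p = (\<integral>x. g x * ln (g x) \<partial>lborel) - (\<integral>x. g x * ln (p x) \<partial>lborel)"
    unfolding rel_entropy_def split using int_gg int_gp by simp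
  define k where "k x = g x * ln (g x / p x) - g x + p x" for x
  have k_nonneg: "\<And>x. 0 \<le> k x" and k_zero: "\<And>x. k x = 0 \<longleftrightarrow> g x = p x"
    unfolding k_def using gibbs_pointwise g0 p_pos by auto
  have int_k: "integrable lborel k" and rel_k: "rel_entropy g p = integral\<^sup>L lborel k"
    unfolding k_def rel_entropy_def using int_rel prob_densityD[OF g] prob_densityD[OF p] by simp_all
  show "rel_entropy g p \<ge> 0" unfolding rel_k using k_nonneg by (simp add: integral_nonneg_AE)
  have "integral\<^sup>L lborel k = 0 \<longleftrightarrow> (AE x in lborel. k x = 0)"
    using int_k k_nonneg by (intro integral_nonneg_eq_0_iff_AE) auto
  then show "rel_entropy g p = 0 \<longleftrightarrow> (AE x in lborel. g x = p x)" unfolding rel_k k_zero .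
qed

lemma prob_density_normal:
  assumes "0 < s"
  shows "prob_density (normal_density m s)"
  using assms by (simp add: prob_density_def has_bochner_integral_iff)

lemma ln_normal_density:
  assumes "0 < s"
  shows "ln (normal_density m s x) = - ln (2 * pi * s\<^sup>2) / 2 - (x - m)\<^sup>2 / (2 * s\<^sup>2)"
proof -
  have p: "2 * pi * s\<^sup>2 > 0" using assms by simp
  have "ln (normal_density m s x) = ln (1 / sqrt (2 * pi * s\<^sup>2)) + ln (exp (-(x - m)\<^sup>2 / (2 * s\<^sup>2)))"
    unfolding normal_density_def using p by (subst ln_mult) auto
  also have "\<dots> = - ln (2 * pi * s\<^sup>2) / 2 - (x - m)\<^sup>2 / (2 * s\<^sup>2)"
    using p by (simp add: ln_div ln_sqrt)
  finally show ?thesis .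
qed

lemma normal_cross_entropy:
  assumes h: "prob_density h" and s: "0 < s"
    and int_sq: "integrable lborel (\<lambda>x. h x * (x - m)\<^sup>2)"
  shows "integrable lborel (\<lambda>x. h x * ln (normal_density m s x))"
    and "(\<integral>x. h x * ln (normal_density m s x) \<partial>lborel)
           = - ln (2 * pi * s\<^sup>2) / 2 - (\<integral>x. h x * (x - m)\<^sup>2 \<partial>lborel) / (2 * s\<^sup>2)"
proof -
  have expand: "(\<lambda>x. h x * ln (normal_density m s x))
      = (\<lambda>x. (- ln (2 * pi * s\<^sup>2) / 2) * h x - (1 / (2 * s\<^sup>2)) * (h x * (x - m)\<^sup>2))"
    using s by (auto simp: ln_normal_density algebra_simps)
  show "integrable lborel (\<lambda>x. h x * ln (normal_density m s x))"
    unfolding expand using prob_densityD[OF h] int_sq by simp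
  show "(\<integral>x. h x * ln (normal_density m s x) \<partial>lborel)
           = - ln (2 * pi * s\<^sup>2) / 2 - (\<integral>x. h x * (x - m)\<^sup>2 \<partial>lborel) / (2 * s\<^sup>2)"
    unfolding expand using prob_densityD[OF h] int_sq by simp
qed

lemma rel_entropy_normal:
  assumes h: "prob_density h" and s: "0 < s"
    and int_hh: "integrable lborel (\<lambda>x. h x * ln (h x))"
    and int_sq: "integrable lborel (\<lambda>x. h x * (x - m)\<^sup>2)"
    and var: "(\<integral>x. h x * (x - m)\<^sup>2 \<partial>lborel) = s\<^sup>2"
  shows "rel_entropy h (normal_density m s) = - diff_entropy h + ln (2 * pi * s\<^sup>2) / 2 + 1 / 2"
    and "rel_entropy h (normal_density m s) \<ge> 0"
    and "rel_entropy h (normal_density m s) = 0 \<longleftrightarrow> (AE x in lborel. h x = normal_density m s x)"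
proof -
  note cross = normal_cross_entropy[OF h s int_sq]
  note G = gibbs[OF h prob_density_normal[OF s] normal_density_pos[OF s] int_hh cross(1)]
  show "rel_entropy h (normal_density m s) = - diff_entropy h + ln (2 * pi * s\<^sup>2) / 2 + 1 / 2"
    unfolding G(1) cross(2) var diff_entropy_def using s by simp
  show "rel_entropy h (normal_density m s) \<ge> 0" by (rule G(2))
  show "rel_entropy h (normal_density m s) = 0 \<longleftrightarrow> (AE x in lborel. h x = normal_density m s x)"
    by (rule G(3))
qed

lemma normal_mean_var:
  assumes [measurable]: "f \<in> borel_measurable borel"
    and s: "0 < s" and ae: "AE x in lborel. f x = normal_density m s x"
  shows "dens_mean f = m" and "dens_var f = s\<^sup>2"
proof -
  have "dens_mean f = (\<integral>x. normal_density m s x * x \<partial>lborel)"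
    unfolding dens_mean_def by (rule integral_cong_AE) (use ae in auto)
  then show mean: "dens_mean f = m" using integral_normal_moment_nz_1[OF s] by simp
  have "dens_var f = (\<integral>x. normal_density m s x * (x - m) ^ (2 * 1) \<partial>lborel)"
    unfolding dens_var_def mean by (rule integral_cong_AE) (use ae in auto)
  then show "dens_var f = s\<^sup>2" using integral_normal_moment_even[OF s, of m 1] by simp
qed

lemma char_normal_density:
  assumes s: "0 < s"
  shows "char (dens_distr (normal_density m s)) t = iexp (m * t) * complex_of_real (exp (- (s * t)\<^sup>2 / 2))"
proof -
  have "char (dens_distr (normal_density m s)) t
      = (\<integral>x. normal_density m s x *\<^sub>R iexp (t * x) \<partial>lborel)"
    unfolding char_def by (subst integral_density) auto
  also have "\<dots> = \<bar>s\<bar> *\<^sub>R (\<integral>y. normal_density m s (m + s * y) *\<^sub>R iexp (t * (m + s * y)) \<partial>lborel)"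
    using s by (subst lborel_integral_real_affine[where c = s and t = m]) auto
  also have "\<dots> = (\<integral>y. std_normal_density y *\<^sub>R (iexp (m * t) * iexp ((s * t) * y)) \<partial>lborel)"
  proof -
    have "\<bar>s\<bar> * normal_density m s (m + s * y) = std_normal_density y" for y
      using s unfolding normal_density_def by (simp add: real_sqrt_mult power2_eq_square field_simps)
    moreover have "iexp (t * (m + s * y)) = iexp (m * t) * iexp ((s * t) * y)" for y
      by (simp add: exp_add[symmetric] algebra_simps)
    ultimately have "\<bar>s\<bar> *\<^sub>R (normal_density m s (m + s * y) *\<^sub>R iexp (t * (m + s * y)))
           = std_normal_density y *\<^sub>R (iexp (m * t) * iexp ((s * t) * y))" for y
      by (metis scaleR_scaleR)
    then show ?thesis by (subst integral_scaleR_right[symmetric]) (simp del: of_real_mult)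
  qed
  also have "\<dots> = iexp (m * t) * (\<integral>y. std_normal_density y *\<^sub>R iexp ((s * t) * y) \<partial>lborel)"
    by (simp only: mult_scaleR_right[symmetric] integral_mult_right_zero)
  also have "(\<integral>y. std_normal_density y *\<^sub>R iexp ((s * t) * y) \<partial>lborel) = char std_normal_distribution (s * t)"
    unfolding char_def by (subst integral_density) auto
  also have "\<dots> = complex_of_real (exp (- (s * t)\<^sup>2 / 2))"
    by (simp add: char_std_normal_distribution)
  finally show ?thesis .
qed

lemma char_normal_mult:
  assumes s1: "0 < s1" and s2: "0 < s2"
  shows "char (dens_distr (normal_density m1 s1)) t * char (dens_distr (normal_density m2 s2)) t
       = char (dens_distr (normal_density (m1 + m2) (sqrt (s1\<^sup>2 + s2\<^sup>2)))) t"
proof -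
  have s12: "0 < sqrt (s1\<^sup>2 + s2\<^sup>2)" using s1 by (simp add: add_pos_nonneg)
  have gauss_exp: "iexp a * complex_of_real (exp b) = exp (\<i> * complex_of_real a + complex_of_real b)"
    for a b by (simp add: exp_add exp_of_real)
  have add_exponents: "(\<i> * complex_of_real a1 + complex_of_real b1) + (\<i> * complex_of_real a2 + complex_of_real b2)
      = \<i> * complex_of_real (a1 + a2) + complex_of_real (b1 + b2)" for a1 a2 b1 b2 :: real
    by (simp add: algebra_simps)
  have mean_sum: "m1 * t + m2 * t = (m1 + m2) * t" by (simp add: algebra_simps)
  have var_sum: "- (s1 * t)\<^sup>2 / 2 + - (s2 * t)\<^sup>2 / 2 = - (sqrt (s1\<^sup>2 + s2\<^sup>2) * t)\<^sup>2 / 2"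
    by (simp add: power_mult_distrib field_simps)
  have "iexp (m1 * t) * complex_of_real (exp (- (s1 * t)\<^sup>2 / 2)) *
        (iexp (m2 * t) * complex_of_real (exp (- (s2 * t)\<^sup>2 / 2)))
      = iexp ((m1 + m2) * t) * complex_of_real (exp (- (sqrt (s1\<^sup>2 + s2\<^sup>2) * t)\<^sup>2 / 2))"
    by (simp only: gauss_exp mult_exp_exp add_exponents mean_sum var_sum)
  then show ?thesis unfolding char_normal_density[OF s1] char_normal_density[OF s2] char_normal_density[OF s12] .
qed

lemma conv_prob_density:
  assumes f: "prob_density f" and g: "prob_density g"
  shows "dens_distr (conv f g) = (dens_distr f \<star> dens_distr g)"
    and "prob_density (conv f g)"
proof -
  have [measurable]: "f \<in> borel_measurable borel" "g \<in> borel_measurable borel"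
    and nn: "\<And>x. 0 \<le> f x" "\<And>x. 0 \<le> g x"
    using prob_densityD[OF f] prob_densityD[OF g] by auto
  interpret F: real_distribution "dens_distr f" by (rule real_distribution_dens_distr[OF f])
  interpret G: real_distribution "dens_distr g" by (rule real_distribution_dens_distr[OF g])
  interpret FG: pair_prob_space "dens_distr f" "dens_distr g" ..
  have conv_meas[measurable]: "conv f g \<in> borel_measurable borel"
  proof -
    have "(\<lambda>x. \<integral>y. f y * g (x - y) \<partial>lborel) \<in> borel_measurable lborel"
      by (rule lborel.borel_measurable_lebesgue_integral) measurable
    then show ?thesis unfolding conv_def[abs_def] by simp
  qed
  have conv_nonneg: "0 \<le> conv f g x" for x
    unfolding conv_def using nn by (simp add: integral_nonneg_AE)
  define h where "h x = (\<integral>\<^sup>+y. ennreal (g (x - y)) * ennreal (f y) \<partial>lborel)" for x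
  have [measurable]: "h \<in> borel_measurable borel" unfolding h_def by measurable
  have FG_h: "(dens_distr f \<star> dens_distr g) = density lborel h"
  proof -
    have "(dens_distr f \<star> dens_distr g) = (dens_distr g \<star> dens_distr f)"
      by (rule convolution_commutative) (auto intro: F.finite_measure_axioms G.finite_measure_axioms)
    also have "\<dots> = density lborel h"
      unfolding h_def by (rule convolution_density) (auto intro: F.finite_measure_axioms G.finite_measure_axioms)
    finally show ?thesis .
  qed
  have prob_FG: "prob_space ((dens_distr f \<star> dens_distr g))"
    unfolding convolution_def by (rule FG.prob_space_distr) simp
  then have "emeasure (density lborel h) UNIV = 1"
    unfolding FG_h using prob_space.emeasure_space_1 by fastforce
  then have "(\<integral>\<^sup>+x. h x \<partial>lborel) = 1" by (simp add: emeasure_density)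
  then have "AE x in lborel. h x \<noteq> \<infinity>" by (intro nn_integral_PInf_AE) (auto simp: h_def)
  then have "AE x in lborel. ennreal (conv f g x) = h x"
  proof eventually_elim
    case (elim x)
    have hx: "h x = (\<integral>\<^sup>+y. ennreal (f y * g (x - y)) \<partial>lborel)"
      unfolding h_def using nn by (simp add: ennreal_mult' mult.commute)
    have "integrable lborel (\<lambda>y. f y * g (x - y))"
    proof (rule integrableI_bounded)
      show "(\<integral>\<^sup>+y. ennreal (norm (f y * g (x - y))) \<partial>lborel) < \<infinity>"
        using elim nn unfolding hx by (simp add: less_top)
    qed measurable
    then show ?case unfolding hx conv_def using nn by (simp add: nn_integral_eq_integral)
  qed
  then have "dens_distr (conv f g) = density lborel h" by (intro density_cong) auto
  then show dens_conv: "dens_distr (conv f g) = (dens_distr f \<star> dens_distr g)" using FG_h by simp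
  have "(\<integral>\<^sup>+x. ennreal (conv f g x) \<partial>lborel) = 1"
    using prob_space.emeasure_space_1[OF prob_FG] unfolding dens_conv[symmetric]
    by (simp add: emeasure_density)
  then have "integrable lborel (conv f g)" and "integral\<^sup>L lborel (conv f g) = 1"
    using conv_nonneg by (auto intro: integrableI_nn_integral_finite simp: integral_eq_nn_integral)
  then show "prob_density (conv f g)"
    using conv_nonneg by (simp add: prob_density_def has_bochner_integral_iff)
qed

lemma integral_product_pair:
  fixes a :: "'a \<Rightarrow> 'c::{real_normed_field, banach, second_countable_topology}"
    and b :: "'b \<Rightarrow> 'c"
  assumes "sigma_finite_measure M" "sigma_finite_measure N"
    and [measurable]: "a \<in> borel_measurable M" "b \<in> borel_measurable N"
    and int_a: "integrable M a" and int_b: "integrable N b"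
  shows "integrable (M \<Otimes>\<^sub>M N) (\<lambda>z. a (fst z) * b (snd z))"
    and "(\<integral>z. a (fst z) * b (snd z) \<partial>(M \<Otimes>\<^sub>M N)) = integral\<^sup>L M a * integral\<^sup>L N b"
proof -
  interpret MN: pair_sigma_finite M N using assms(1,2) by (simp add: pair_sigma_finite_def)
  show int_ab: "integrable (M \<Otimes>\<^sub>M N) (\<lambda>z. a (fst z) * b (snd z))"
  proof (rule MN.Fubini_integrable)
    have "(\<lambda>x. \<integral>y. norm (a x * b y) \<partial>N) = (\<lambda>x. norm (a x) * (\<integral>y. norm (b y) \<partial>N))"
      by (simp add: norm_mult)
    then show "integrable M (\<lambda>x. \<integral>y. norm (a (fst (x, y)) * b (snd (x, y))) \<partial>N)"
      using int_a by (simp add: integrable_mult_left integrable_norm)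
    show "AE x in M. integrable N (\<lambda>y. a (fst (x, y)) * b (snd (x, y)))"
      using int_b by (simp add: integrable_mult_right)
  qed measurable
  have "(\<integral>z. a (fst z) * b (snd z) \<partial>(M \<Otimes>\<^sub>M N)) = (\<integral>x. (\<integral>y. a x * b y \<partial>N) \<partial>M)"
    using MN.integral_fst[of "\<lambda>x y. a x * b y"] int_ab by (simp add: case_prod_beta')
  then show "(\<integral>z. a (fst z) * b (snd z) \<partial>(M \<Otimes>\<^sub>M N)) = integral\<^sup>L M a * integral\<^sup>L N b"
    by simp
qed

lemma conv_integral:
  fixes k :: "real \<Rightarrow> 'c::{banach, second_countable_topology}"
  assumes f: "prob_density f" and g: "prob_density g" and [measurable]: "k \<in> borel_measurable borel"
  shows "integrable lborel (\<lambda>x. conv f g x *\<^sub>R k x)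
           \<longleftrightarrow> integrable (dens_distr f \<Otimes>\<^sub>M dens_distr g) (\<lambda>z. k (fst z + snd z))"
    and "(\<integral>x. conv f g x *\<^sub>R k x \<partial>lborel)
           = (\<integral>z. k (fst z + snd z) \<partial>(dens_distr f \<Otimes>\<^sub>M dens_distr g))"
proof -
  note conv = conv_prob_density[OF f g]
  have sum_distr: "dens_distr (conv f g)
      = distr (dens_distr f \<Otimes>\<^sub>M dens_distr g) borel (\<lambda>z. fst z + snd z)"
    using conv(1) by (simp add: convolution_def case_prod_beta')
  show "integrable lborel (\<lambda>x. conv f g x *\<^sub>R k x)
           \<longleftrightarrow> integrable (dens_distr f \<Otimes>\<^sub>M dens_distr g) (\<lambda>z. k (fst z + snd z))"
    using dens_distr_integral(1)[OF conv(2), of k] unfolding sum_distr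
    by (simp add: integrable_distr_eq)
  show "(\<integral>x. conv f g x *\<^sub>R k x \<partial>lborel)
           = (\<integral>z. k (fst z + snd z) \<partial>(dens_distr f \<Otimes>\<^sub>M dens_distr g))"
    using dens_distr_integral(2)[OF conv(2), of k] unfolding sum_distr
    by (simp add: integral_distr)
qed

lemma char_conv:
  assumes f: "prob_density f" and g: "prob_density g"
  shows "char (dens_distr (conv f g)) t = char (dens_distr f) t * char (dens_distr g) t"
proof -
  interpret F: real_distribution "dens_distr f" by (rule real_distribution_dens_distr[OF f])
  interpret G: real_distribution "dens_distr g" by (rule real_distribution_dens_distr[OF g])
  have "char (dens_distr (conv f g)) t = (\<integral>x. conv f g x *\<^sub>R iexp (t * x) \<partial>lborel)"
    unfolding char_def by (rule dens_distr_integral(2)[OF conv_prob_density(2)[OF f g]]) measurable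
  also have "\<dots> = (\<integral>z. iexp (t * fst z) * iexp (t * snd z) \<partial>(dens_distr f \<Otimes>\<^sub>M dens_distr g))"
    by (subst conv_integral(2)[OF f g]) (auto simp: distrib_left exp_add[symmetric] algebra_simps)
  also have "\<dots> = char (dens_distr f) t * char (dens_distr g) t"
    unfolding char_def
    by (rule integral_product_pair(2)) (auto intro: F.integrable_iexp G.integrable_iexp
        F.sigma_finite_measure_axioms G.sigma_finite_measure_axioms)
  finally show ?thesis .
qed

lemma conv_variance:
  assumes f: "prob_density f" and g: "prob_density g"
    and var_f: "integrable lborel (\<lambda>x. x\<^sup>2 * f x)" and var_g: "integrable lborel (\<lambda>x. x\<^sup>2 * g x)"
  shows "integrable lborel (\<lambda>x. conv f g x * (x - (dens_mean f + dens_mean g))\<^sup>2)"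
    and "(\<integral>x. conv f g x * (x - (dens_mean f + dens_mean g))\<^sup>2 \<partial>lborel) = dens_var f + dens_var g"
proof -
  interpret F: real_distribution "dens_distr f" by (rule real_distribution_dens_distr[OF f])
  interpret G: real_distribution "dens_distr g" by (rule real_distribution_dens_distr[OF g])
  let ?mf = "dens_mean f" and ?mg = "dens_mean g"
  note Mf = dens_distr_centred_moments[OF f var_f]
  note Mg = dens_distr_centred_moments[OF g var_g]
  note product = integral_product_pair[OF F.sigma_finite_measure_axioms G.sigma_finite_measure_axioms]
  note P1 = product[of "\<lambda>x. (x - ?mf)\<^sup>2" "\<lambda>_. 1", OF _ _ Mf(3)]
  note P2 = product[of "\<lambda>x. x - ?mf" "\<lambda>y. y - ?mg", OF _ _ Mf(1) Mg(1)]
  note P3 = product[of "\<lambda>_. 1" "\<lambda>y. (y - ?mg)\<^sup>2", OF _ _ _ Mg(3)]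
  have expand: "(\<lambda>z. (fst z + snd z - (?mf + ?mg))\<^sup>2) = (\<lambda>z.
      (fst z - ?mf)\<^sup>2 * 1 + 2 * ((fst z - ?mf) * (snd z - ?mg)) + 1 * (snd z - ?mg)\<^sup>2)"
    by (auto simp: power2_eq_square algebra_simps)
  have int_sum: "integrable (dens_distr f \<Otimes>\<^sub>M dens_distr g) (\<lambda>z. (fst z + snd z - (?mf + ?mg))\<^sup>2)"
    and sum_var: "(\<integral>z. (fst z + snd z - (?mf + ?mg))\<^sup>2 \<partial>(dens_distr f \<Otimes>\<^sub>M dens_distr g))
        = dens_var f + dens_var g"
    unfolding expand using P1 P2 P3 Mf Mg F.prob_space G.prob_space by simp_all
  have [measurable]: "(\<lambda>x::real. (x - (?mf + ?mg))\<^sup>2) \<in> borel_measurable borel" by measurable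
  show "integrable lborel (\<lambda>x. conv f g x * (x - (?mf + ?mg))\<^sup>2)"
    using conv_integral(1)[OF f g, of "\<lambda>x. (x - (?mf + ?mg))\<^sup>2"] int_sum by simp
  show "(\<integral>x. conv f g x * (x - (?mf + ?mg))\<^sup>2 \<partial>lborel) = dens_var f + dens_var g"
    using conv_integral(2)[OF f g, of "\<lambda>x. (x - (?mf + ?mg))\<^sup>2"] sum_var by simp
qed

lemma continuous_sqrt_of_one:
  fixes d :: "real \<Rightarrow> complex"
  assumes cont: "continuous_on UNIV d" and sq: "\<And>t. (d t)\<^sup>2 = 1" and d0: "d 0 = 1"
  shows "d t = 1"
proof (rule ccontr)
  assume "d t \<noteq> 1"
  then have dt: "d t = -1" using sq[of t] power2_eq_1_iff by blast
  have re_pm: "Re (d x) = 1 \<or> Re (d x) = -1" for x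
    using sq[of x] power2_eq_1_iff[of "d x"] by auto
  have cont_re: "continuous_on S (\<lambda>x. Re (d x))" for S
    by (intro continuous_intros continuous_on_subset[OF cont]) auto
  have "\<exists>x. Re (d x) = 0"
  proof (cases "t \<ge> 0")
    case True
    show ?thesis using IVT2'[of "\<lambda>x. Re (d x)" t 0 0, OF _ _ True cont_re] d0 dt by auto
  next
    case False
    show ?thesis using IVT'[of "\<lambda>x. Re (d x)" t 0 0, OF _ _ _ cont_re] d0 dt False by auto
  qed
  then obtain x where "Re (d x) = 0" by blast
  then show False using re_pm[of x] by simp
qed

text \<open>A distribution whose characteristic function squares to that of a Gaussian is that
  Gaussian: the quotient of the two characteristic functions is a continuous square root of 1.\<close>

lemma char_sq_normal_imp_normal:
  fixes F :: "real measure"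
  assumes F: "real_distribution F" and s: "0 < s"
    and sq: "\<And>t. (char F t)\<^sup>2 = (char (dens_distr (normal_density m s)) t)\<^sup>2"
  shows "F = dens_distr (normal_density m s)"
proof -
  interpret F: real_distribution F by fact
  let ?N = "dens_distr (normal_density m s)"
  have N: "real_distribution ?N"
    by (rule real_distribution_dens_distr[OF prob_density_normal[OF s]])
  have N_nonzero: "char ?N t \<noteq> 0" for t unfolding char_normal_density[OF s] by simp
  define d where "d t = char F t / char ?N t" for t
  have "continuous_on UNIV d"
    unfolding d_def using F.isCont_char real_distribution.isCont_char[OF N] N_nonzero
    by (intro continuous_intros) (auto simp: continuous_at_imp_continuous_on)
  moreover have "(d t)\<^sup>2 = 1" for t unfolding d_def using sq[of t] N_nonzero[of t] by (simp add: power_divide)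
  moreover have "d 0 = 1" unfolding d_def using F.char_zero real_distribution.char_zero[OF N] by simp
  ultimately have "d t = 1" for t by (rule continuous_sqrt_of_one)
  then have "char F = char ?N" unfolding d_def using N_nonzero by (auto simp: divide_eq_1_iff)
  then show ?thesis using Levy_uniqueness[OF F N] by blast
qed

lemma normal_conv_normal:
  assumes f: "prob_density f" and g: "prob_density g" and s1: "0 < s1" and s2: "0 < s2"
    and f_normal: "AE x in lborel. f x = normal_density m1 s1 x"
    and g_normal: "AE x in lborel. g x = normal_density m2 s2 x"
  shows "AE x in lborel. conv f g x = normal_density (m1 + m2) (sqrt (s1\<^sup>2 + s2\<^sup>2)) x"
proof -
  have s12: "0 < sqrt (s1\<^sup>2 + s2\<^sup>2)" using s1 by (simp add: add_pos_nonneg)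
  note fg = conv_prob_density(2)[OF f g]
  have "dens_distr f = dens_distr (normal_density m1 s1)"
    and "dens_distr g = dens_distr (normal_density m2 s2)"
    using f_normal g_normal prob_densityD[OF f] prob_densityD[OF g] by (auto simp: dens_distr_eq_iff)
  then have "char (dens_distr (conv f g)) = char (dens_distr (normal_density (m1 + m2) (sqrt (s1\<^sup>2 + s2\<^sup>2))))"
    using char_conv[OF f g] char_normal_mult[OF s1 s2] by auto
  then have "dens_distr (conv f g) = dens_distr (normal_density (m1 + m2) (sqrt (s1\<^sup>2 + s2\<^sup>2)))"
    using Levy_uniqueness real_distribution_dens_distr[OF fg]
      real_distribution_dens_distr[OF prob_density_normal[OF s12]] by blast
  then show ?thesis using prob_densityD[OF fg] by (simp add: dens_distr_eq_iff)
qed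

lemma self_conv_normal_imp_normal:
  assumes f: "prob_density f" and s: "0 < s"
    and ff_normal: "AE x in lborel. conv f f x = normal_density (2 * m) (sqrt 2 * s) x"
  shows "AE x in lborel. f x = normal_density m s x"
proof -
  have s_twice: "sqrt (s\<^sup>2 + s\<^sup>2) = sqrt 2 * s" and m_twice: "m + m = 2 * m"
    using s by (simp_all add: real_sqrt_mult)
  note ff = conv_prob_density(2)[OF f f]
  have "dens_distr (conv f f) = dens_distr (normal_density (2 * m) (sqrt 2 * s))"
    using ff_normal prob_densityD[OF ff] by (simp add: dens_distr_eq_iff)
  then have "(char (dens_distr f) t)\<^sup>2 = (char (dens_distr (normal_density m s)) t)\<^sup>2" for t
    using char_conv[OF f f, of t] char_normal_mult[where ?m1.0 = m and ?m2.0 = m and t = t, OF s s]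
    unfolding s_twice m_twice by (simp add: power2_eq_square)
  then have "dens_distr f = dens_distr (normal_density m s)"
    by (rule char_sq_normal_imp_normal[OF real_distribution_dens_distr[OF f] s])
  then show ?thesis using prob_densityD[OF f] by (simp add: dens_distr_eq_iff)
qed

lemma self_conv_normal_iff:
  assumes f: "prob_density f" and finvar: "integrable lborel (\<lambda>x. x\<^sup>2 * f x)"
  shows "(AE x in lborel. conv f f x = normal_density (2 * dens_mean f) (sqrt (2 * dens_var f)) x)
     \<longleftrightarrow> (\<exists>m s. 0 < s \<and> (AE x in lborel. f x = normal_density m s x))"
proof
  have var_pos: "0 < dens_var f" by (rule dens_var_pos[OF f finvar])
  assume "AE x in lborel. conv f f x = normal_density (2 * dens_mean f) (sqrt (2 * dens_var f)) x"
  then have "AE x in lborel. f x = normal_density (dens_mean f) (sqrt (dens_var f)) x"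
    using var_pos by (intro self_conv_normal_imp_normal[OF f]) (simp_all add: real_sqrt_mult)
  then show "\<exists>m s. 0 < s \<and> (AE x in lborel. f x = normal_density m s x)"
    using var_pos by (intro exI[of _ "dens_mean f"] exI[of _ "sqrt (dens_var f)"]) simp
next
  assume "\<exists>m s. 0 < s \<and> (AE x in lborel. f x = normal_density m s x)"
  then obtain m s where s: "0 < s" and f_normal: "AE x in lborel. f x = normal_density m s x"
    by blast
  note moments = normal_mean_var[OF prob_densityD(1)[OF f] s f_normal]
  have "sqrt (s\<^sup>2 + s\<^sup>2) = sqrt (2 * dens_var f)" and "m + m = 2 * dens_mean f"
    using moments by simp_all
  then show "AE x in lborel. conv f f x = normal_density (2 * dens_mean f) (sqrt (2 * dens_var f)) x"
    using normal_conv_normal[OF f f s s f_normal f_normal] by simp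
qed

lemma rel_entropy_fitted_normal:
  assumes h: "prob_density h" and finvar: "integrable lborel (\<lambda>x. x\<^sup>2 * h x)"
    and ent: "integrable lborel (\<lambda>x. h x * ln (h x))"
  shows "rel_entropy h (normal_density (dens_mean h) (sqrt (dens_var h)))
           = - diff_entropy h + ln (2 * pi * dens_var h) / 2 + 1 / 2"
proof -
  have v: "0 < dens_var h" by (rule dens_var_pos[OF h finvar])
  have "integrable lborel (\<lambda>x. h x * (x - dens_mean h)\<^sup>2)"
    and "(\<integral>x. h x * (x - dens_mean h)\<^sup>2 \<partial>lborel) = (sqrt (dens_var h))\<^sup>2"
    using dens_moments(3)[OF h finvar] v by (simp_all add: mult.commute dens_var_def)
  from rel_entropy_normal(1)[OF h _ ent this] show ?thesis using v by simp
qed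

lemma rel_entropy_self_conv_normal:
  assumes f: "prob_density f" and finvar: "integrable lborel (\<lambda>x. x\<^sup>2 * f x)"
    and ent: "integrable lborel (\<lambda>x. conv f f x * ln (conv f f x))"
  defines "\<psi> \<equiv> normal_density (2 * dens_mean f) (sqrt (2 * dens_var f))"
  shows "rel_entropy (conv f f) \<psi> = - diff_entropy (conv f f) + ln (2 * pi * (2 * dens_var f)) / 2 + 1 / 2"
    and "rel_entropy (conv f f) \<psi> \<ge> 0"
    and "rel_entropy (conv f f) \<psi> = 0 \<longleftrightarrow> (AE x in lborel. conv f f x = \<psi> x)"
proof -
  have v: "0 < dens_var f" by (rule dens_var_pos[OF f finvar])
  have "integrable lborel (\<lambda>x. conv f f x * (x - 2 * dens_mean f)\<^sup>2)"
    and "(\<integral>x. conv f f x * (x - 2 * dens_mean f)\<^sup>2 \<partial>lborel) = (sqrt (2 * dens_var f))\<^sup>2"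
    using conv_variance[OF f f finvar finvar] v by simp_all
  note D = rel_entropy_normal[OF conv_prob_density(2)[OF f f] _ ent this, folded \<psi>_def]
  show "rel_entropy (conv f f) \<psi> = - diff_entropy (conv f f) + ln (2 * pi * (2 * dens_var f)) / 2 + 1 / 2"
    using D(1) v by simp
  show "rel_entropy (conv f f) \<psi> \<ge> 0" using D(2) v by simp
  show "rel_entropy (conv f f) \<psi> = 0 \<longleftrightarrow> (AE x in lborel. conv f f x = \<psi> x)" using D(3) v by simp
qed

lemma doubling_const_decomposition:
  assumes f: "prob_density f" and finvar: "integrable lborel (\<lambda>x. x\<^sup>2 * f x)"
    and ent_f: "integrable lborel (\<lambda>x. f x * ln (f x))"
    and ent_ff: "integrable lborel (\<lambda>x. conv f f x * ln (conv f f x))"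
  shows "doubling_const f
     = exp (- rel_entropy (conv f f) (normal_density (2 * dens_mean f) (sqrt (2 * dens_var f))))
       * (sqrt 2 * exp (rel_entropy f (normal_density (dens_mean f) (sqrt (dens_var f)))))"
proof -
  let ?D_f = "rel_entropy f (normal_density (dens_mean f) (sqrt (dens_var f)))"
  let ?D_ff = "rel_entropy (conv f f) (normal_density (2 * dens_mean f) (sqrt (2 * dens_var f)))"
  have v: "0 < dens_var f" by (rule dens_var_pos[OF f finvar])
  have ln_double: "ln (2 * pi * (2 * dens_var f)) = ln 2 + ln (2 * pi * dens_var f)"
  proof -
    have "2 * pi * (2 * dens_var f) = 2 * (2 * pi * dens_var f)" by simp
    then show ?thesis using v by (simp only: ln_mult) simp
  qed
  have "diff_entropy (conv f f) - diff_entropy f = - ?D_ff + ln 2 / 2 + ?D_f"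
    using rel_entropy_fitted_normal[OF f finvar ent_f] rel_entropy_self_conv_normal(1)[OF f finvar ent_ff]
    unfolding ln_double by (simp add: field_simps)
  then have "doubling_const f = exp (- ?D_ff + ln 2 / 2 + ?D_f)"
    unfolding doubling_const_def by simp
  also have "\<dots> = exp (- ?D_ff) * (exp (ln 2 / 2) * exp ?D_f)"
    by (simp only: exp_add mult.assoc)
  also have "exp (ln 2 / 2) = sqrt 2"
    by (simp add: powr_half_sqrt[symmetric] powr_def)
  finally show ?thesis .
qed

theorem mainTheorem18:
  fixes f :: "real \<Rightarrow> real"
  assumes meas: "f \<in> borel_measurable lborel"
    and nonneg: "\<And>x. f x \<ge> 0"
    and prob: "has_bochner_integral lborel f 1"
    and finvar: "integrable lborel (\<lambda>x. x\<^sup>2 * f x)"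
    and hX: "integrable lborel (\<lambda>x. f x * ln (f x))"
    and hXX: "integrable lborel (\<lambda>x. conv f f x * ln (conv f f x))"
  shows "doubling_const f
           \<le> sqrt 2 * exp (rel_entropy f (normal_density (dens_mean f) (sqrt (dens_var f))))
       \<and> (doubling_const f
           = sqrt 2 * exp (rel_entropy f (normal_density (dens_mean f) (sqrt (dens_var f))))
         \<longleftrightarrow> (\<exists>m s. s > 0 \<and> (AE x in lborel. f x = normal_density m s x)))"
proof -
  have f: "prob_density f" using meas nonneg prob by (simp add: prob_density_def)
  let ?bound = "sqrt 2 * exp (rel_entropy f (normal_density (dens_mean f) (sqrt (dens_var f))))"
  let ?D_ff = "rel_entropy (conv f f) (normal_density (2 * dens_mean f) (sqrt (2 * dens_var f)))"
  have decomposition: "doubling_const f = exp (- ?D_ff) * ?bound"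
    by (rule doubling_const_decomposition[OF f finvar hX hXX])
  note D_ff = rel_entropy_self_conv_normal[OF f finvar hXX]
  have bound_pos: "0 < ?bound" by simp
  have "doubling_const f \<le> ?bound"
    unfolding decomposition using D_ff(2) bound_pos by (simp add: mult_le_cancel_right1)
  moreover have "doubling_const f = ?bound \<longleftrightarrow> ?D_ff = 0"
    unfolding decomposition using bound_pos by simp
  moreover have "?D_ff = 0 \<longleftrightarrow> (\<exists>m s. s > 0 \<and> (AE x in lborel. f x = normal_density m s x))"
    unfolding D_ff(3) by (rule self_conv_normal_iff[OF f finvar])
  ultimately show ?thesis by simp
qed

end
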